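(* Consider the network model and the NSB algorithm described in the context, with no packet arrivals after time 0. Consider any frame $k'$, consisting of time-slots $p=3k'$, $p+1$, $p+2$. If $\Delta(p)\ge 2$, then under NSB the maximum node queue length at the end of the frame (i.e., after the transmissions of slot $p+2$) is at most $\Delta(p)-2$.
   Context: Network model. $G=(V,E)$ is a finite undirected graph with $n=|V|$ nodes; $L(i)$ denotes the set of links incident to node $i$. Time is slotted, $k=0,1,2,\dots$. $Q_l(k)$ is the number of packets waiting at link $l$ in time-slot $k$, and the node queue length (workload) is $Q_i(k)=\sum_{l\in L(i)}Q_l(k)$; $\Delta(k)=\max_{i\in V}Q_i(k)$. A schedule in a slot is a matching of $G$ (links pairwise sharing no endpoint); only links with $Q_l(k)>0$ may be scheduled; each scheduled link transmits exactly one packet, which leaves the system. NSB algorithm. Frame $k'$ consists of slots $3k',3k'+1,3k'+2$. Let $R_i(k)=1$ if node $i$ is an endpoint of a link scheduled in slot $k$, else $0$ (with $R_i(k)=0$ for $k<0$). Define $U_i(k)=R_i(k-1)R_i(k-2)$ if $k=3k'+2$ for some integer $k'$, and $U_i(k)=R_i(k-1)$ otherwise. Node $i$ is heavy in slot $k$ if $Q_i(k)\ge\frac{n-1}{n}\Delta(k)$. In each slot $k$, NSB sets $w_i(k)=Q_i(k)(2-U_i(k))$ if $i$ is heavy and $w_i(k)=Q_i(k)$ otherwise, excludes links with $Q_l(k)=0$, and schedules a matching $M$ of the remaining links maximizing $\sum_{i:\,M\cap L(i)\ne\emptyset}w_i(k)$ (ties broken arbitrarily). *)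

theory Defs
  imports Complex_Main
begin

definition simple_graph :: "'v set \<Rightarrow> 'v set set \<Rightarrow> bool" where
  "simple_graph V E \<longleftrightarrow> finite V \<and>
     (\<forall>l\<in>E. \<exists>a b. a \<noteq> b \<and> a \<in> V \<and> b \<in> V \<and> l = {a, b})"

definition links_at :: "'v set set \<Rightarrow> 'v \<Rightarrow> 'v set set" where
  "links_at E i = {l \<in> E. i \<in> l}"

definition nodeQ :: "'v set set \<Rightarrow> ('v set \<Rightarrow> nat) \<Rightarrow> 'v \<Rightarrow> nat" where
  "nodeQ E Q i = (\<Sum>l\<in>links_at E i. Q l)"

definition maxQ :: "'v set \<Rightarrow> 'v set set \<Rightarrow> ('v set \<Rightarrow> nat) \<Rightarrow> nat" where
  "maxQ V E Q = Max (nodeQ E Q ` V)"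

definition matching :: "'v set set \<Rightarrow> 'v set set \<Rightarrow> bool" where
  "matching E M \<longleftrightarrow> M \<subseteq> E \<and> (\<forall>l1\<in>M. \<forall>l2\<in>M. l1 \<noteq> l2 \<longrightarrow> l1 \<inter> l2 = {})"

definition feasible :: "'v set set \<Rightarrow> ('v set \<Rightarrow> nat) \<Rightarrow> 'v set set \<Rightarrow> bool" where
  "feasible E Q M \<longleftrightarrow> matching E M \<and> (\<forall>l\<in>M. Q l > 0)"

definition covered :: "'v set set \<Rightarrow> 'v \<Rightarrow> bool" where
  "covered M i \<longleftrightarrow> (\<exists>l\<in>M. i \<in> l)"

definition Rind :: "(nat \<Rightarrow> 'v set set) \<Rightarrow> nat \<Rightarrow> 'v \<Rightarrow> nat" where
  "Rind S k i = (if covered (S k) i then 1 else 0)"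

text \<open>U_i(k); R_i(k) = 0 for negative k (only relevant for k = 0, since k mod 3 = 2 implies k >= 2).\<close>
definition Uind :: "(nat \<Rightarrow> 'v set set) \<Rightarrow> nat \<Rightarrow> 'v \<Rightarrow> nat" where
  "Uind S k i = (if k mod 3 = 2 then Rind S (k - 1) i * Rind S (k - 2) i
                 else if k = 0 then 0 else Rind S (k - 1) i)"

definition heavy :: "'v set \<Rightarrow> 'v set set \<Rightarrow> ('v set \<Rightarrow> nat) \<Rightarrow> 'v \<Rightarrow> bool" where
  "heavy V E Q i \<longleftrightarrow>
     real (nodeQ E Q i) \<ge> (real (card V) - 1) / real (card V) * real (maxQ V E Q)"

definition nsb_w :: "'v set \<Rightarrow> 'v set set \<Rightarrow> (nat \<Rightarrow> 'v set set) \<Rightarrow> nat \<Rightarrow> ('v set \<Rightarrow> nat) \<Rightarrow> 'v \<Rightarrow> nat" where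
  "nsb_w V E S k Q i = (if heavy V E Q i then nodeQ E Q i * (2 - Uind S k i) else nodeQ E Q i)"

definition nsb_weight :: "'v set \<Rightarrow> 'v set set \<Rightarrow> (nat \<Rightarrow> 'v set set) \<Rightarrow> nat \<Rightarrow> ('v set \<Rightarrow> nat) \<Rightarrow> 'v set set \<Rightarrow> nat" where
  "nsb_weight V E S k Q M = (\<Sum>i\<in>{i\<in>V. covered M i}. nsb_w V E S k Q i)"

text \<open>A run of NSB with no arrivals: Q k is the queue vector in slot k, S k the schedule of slot k
  (any maximizer; ties broken arbitrarily).\<close>
definition nsb_run :: "'v set \<Rightarrow> 'v set set \<Rightarrow> (nat \<Rightarrow> 'v set \<Rightarrow> nat) \<Rightarrow> (nat \<Rightarrow> 'v set set) \<Rightarrow> bool" where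
  "nsb_run V E Q S \<longleftrightarrow> (\<forall>k.
      feasible E (Q k) (S k) \<and>
      (\<forall>M. feasible E (Q k) M \<longrightarrow> nsb_weight V E S k (Q k) M \<le> nsb_weight V E S k (Q k) (S k)) \<and>
      (\<forall>l. Q (Suc k) l = Q k l - (if l \<in> S k then 1 else 0)))"

end

theory Submission
  imports Defs
begin

text \<open>
  Let \<open>D = \<Delta>(p)\<close>. In every slot NSB schedules a matching of maximum weight, so (i) no link
  with packets joins two idle nodes of positive load, and (ii) a node of the largest weight is
  served as soon as some feasible schedule serves all nodes of that weight (otherwise an
  alternating path would increase the weight). Nodes of load equal to the maximum whose mutual
  active links are properly 2-coloured can always be served together: double counting packets
  gives Hall's condition for their active neighbourhoods, and a system of distinct neighbours can
  be turned into a matching.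

  A node of load \<open>D\<close> idle in slots \<open>p\<close> and \<open>p+1\<close> would have the top weight \<open>2D\<close> in slot
  \<open>p+1\<close>, and by (i) in slot \<open>p\<close> no active link joins two such nodes; (ii) gives a contradiction,
  so after two slots all loads are at most \<open>D-1\<close>. A node still at \<open>D-1\<close> after slot \<open>p+2\<close> would
  have the top weight \<open>2(D-1)\<close> in slot \<open>p+2\<close>; the nodes of that weight are 2-coloured by whether
  they were served in slot \<open>p+1\<close>, by (i) in slots \<open>p\<close> and \<open>p+1\<close>, and (ii) again gives a
  contradiction.
\<close>

section \<open>Hall's marriage theorem\<close>

lemma Hall_condition_Diff_critical:
  fixes N :: "'a \<Rightarrow> 'b set"
  assumes finA: "finite A" and finN: "\<And>a. a \<in> A \<Longrightarrow> finite (N a)"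
    and Hall: "\<And>B. B \<subseteq> A \<Longrightarrow> card B \<le> card (\<Union>(N ` B))"
    and B: "B \<subseteq> A" "card B = card (\<Union>(N ` B))" and T: "T \<subseteq> A - B"
  shows "card T \<le> card (\<Union>((\<lambda>a. N a - \<Union>(N ` B)) ` T))"
proof -
  have fin: "finite B" "finite T" using B(1) T finA finite_subset by blast+
  have fin_image: "finite (\<Union>(N ` (T \<union> B)))" using B(1) T finN fin by auto
  have "card T + card B = card (T \<union> B)" using T fin by (intro card_Un_disjoint[symmetric]) auto
  also have "\<dots> \<le> card (\<Union>(N ` (T \<union> B)))" using Hall[of "T \<union> B"] B(1) T by blast
  also have "\<dots> = card (\<Union>(N ` (T \<union> B)) - \<Union>(N ` B)) + card (\<Union>(N ` B))"
    using fin_image by (simp add: card_Diff_subset card_mono finite_subset)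
  also have "\<Union>(N ` (T \<union> B)) - \<Union>(N ` B) = \<Union>((\<lambda>a. N a - \<Union>(N ` B)) ` T)" by blast
  finally show ?thesis using B(2) by simp
qed

lemma Hall_condition_remove_surplus:
  fixes N :: "'a \<Rightarrow> 'b set"
  assumes surplus: "\<And>B. B \<subseteq> A \<Longrightarrow> B \<noteq> {} \<Longrightarrow> B \<noteq> A \<Longrightarrow> card B < card (\<Union>(N ` B))"
    and a: "a \<in> A" and T: "T \<subseteq> A - {a}"
  shows "card T \<le> card (\<Union>((\<lambda>x. N x - {b}) ` T))"
proof (cases "T = {}")
  case False
  then have lt: "card T < card (\<Union>(N ` T))" using surplus T a by blast
  then have "finite (\<Union>(N ` T))" using card_gt_0_iff by fastforce
  moreover have "\<Union>((\<lambda>x. N x - {b}) ` T) = \<Union>(N ` T) - {b}" by blast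
  ultimately show ?thesis using lt by (simp add: card_Diff_singleton_if) linarith
qed simp

lemma inj_on_piecewise:
  assumes "inj_on f B" "inj_on g (A - B)" "f ` B \<subseteq> X" "g ` (A - B) \<inter> X = {}"
  shows "inj_on (\<lambda>a. if a \<in> B then f a else g a) A" (is "inj_on ?h A")
proof -
  have "inj_on ?h B" using assms(1) by (simp cong: inj_on_cong)
  moreover have "inj_on ?h (A - B)" using assms(2) by (rule inj_on_cong[THEN iffD2, rotated]) simp
  moreover have "?h ` B \<subseteq> X" "?h ` (A - B) \<inter> X = {}" using assms(3,4) by auto
  ultimately have "inj_on ?h (B \<union> (A - B))" unfolding inj_on_Un by blast
  then show ?thesis by (rule inj_on_subset) blast
qed

lemma Hall_marriage:
  fixes N :: "'a \<Rightarrow> 'b set"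
  assumes "finite A" "\<And>a. a \<in> A \<Longrightarrow> finite (N a)"
    and "\<And>B. B \<subseteq> A \<Longrightarrow> card B \<le> card (\<Union>(N ` B))"
  shows "\<exists>\<sigma>. inj_on \<sigma> A \<and> (\<forall>a\<in>A. \<sigma> a \<in> N a)"
  using assms
proof (induction "card A" arbitrary: A N rule: less_induct)
  case less
  note finA = less.prems(1) and finN = less.prems(2) and Hall = less.prems(3)
  \<comment> \<open>Either a proper subset \<open>B\<close> is tight, and \<open>B\<close> and \<open>A - B\<close> are matched into \<open>N(B)\<close> and its
    complement separately, or every proper subset has surplus and any single choice \<open>a \<mapsto> b\<close> extends.\<close>
  consider "A = {}"
    | B where "B \<subseteq> A" "B \<noteq> {}" "B \<noteq> A" "card B = card (\<Union>(N ` B))"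
    | "A \<noteq> {}" "\<And>B. B \<subseteq> A \<Longrightarrow> B \<noteq> {} \<Longrightarrow> B \<noteq> A \<Longrightarrow> card B < card (\<Union>(N ` B))"
    using Hall le_neq_implies_less by blast
  then show ?case
  proof cases
    case 1
    then show ?thesis by simp
  next
    case (2 B)
    define N' where "N' a = N a - \<Union>(N ` B)" for a
    have finB: "finite B" using 2 finA finite_subset by blast
    have "card B < card A" using 2(1,3) finA by (simp add: psubset_card_mono)
    have "card (A - B) < card A" using 2(1,2) finA by (intro psubset_card_mono) auto
    have "\<exists>\<sigma>. inj_on \<sigma> B \<and> (\<forall>a\<in>B. \<sigma> a \<in> N a)"
      by (rule less.hyps[OF \<open>card B < card A\<close> finB]) (use finN Hall 2(1) in auto)
    then obtain \<sigma>\<^sub>1 where \<sigma>\<^sub>1: "inj_on \<sigma>\<^sub>1 B" "\<forall>a\<in>B. \<sigma>\<^sub>1 a \<in> N a" by blast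
    have "\<exists>\<sigma>. inj_on \<sigma> (A - B) \<and> (\<forall>a\<in>A - B. \<sigma> a \<in> N' a)"
      by (rule less.hyps[OF \<open>card (A - B) < card A\<close>])
        (use finA finN Hall_condition_Diff_critical[OF finA finN Hall 2(1,4)] in \<open>auto simp: N'_def\<close>)
    then obtain \<sigma>\<^sub>2 where \<sigma>\<^sub>2: "inj_on \<sigma>\<^sub>2 (A - B)" "\<forall>a\<in>A - B. \<sigma>\<^sub>2 a \<in> N' a" by blast
    have "inj_on (\<lambda>a. if a \<in> B then \<sigma>\<^sub>1 a else \<sigma>\<^sub>2 a) A"
      using \<sigma>\<^sub>1 \<sigma>\<^sub>2 by (intro inj_on_piecewise[where X = "\<Union>(N ` B)"]) (auto simp: N'_def)
    then show ?thesis
      using \<sigma>\<^sub>1(2) \<sigma>\<^sub>2(2) by (intro exI[of _ "\<lambda>a. if a \<in> B then \<sigma>\<^sub>1 a else \<sigma>\<^sub>2 a"]) (auto simp: N'_def)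
  next
    case 3
    obtain a where a: "a \<in> A" using 3(1) by blast
    obtain b where b: "b \<in> N a" using Hall[of "{a}"] a by fastforce
    have "card (A - {a}) < card A" using a finA by (rule card_Diff1_less[rotated])
    then have "\<exists>\<sigma>. inj_on \<sigma> (A - {a}) \<and> (\<forall>x\<in>A - {a}. \<sigma> x \<in> N x - {b})"
      by (rule less.hyps) (use finA finN Hall_condition_remove_surplus[OF 3(2) a] in auto)
    then obtain \<sigma> where \<sigma>: "inj_on \<sigma> (A - {a})" "\<forall>x\<in>A - {a}. \<sigma> x \<in> N x - {b}" by blast
    have "inj_on (\<sigma>(a := b)) A" using \<sigma> a by (auto simp: inj_on_def)
    then show ?thesis using \<sigma>(2) b by (intro exI[of _ "\<sigma>(a := b)"]) auto
  qed
qed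

section \<open>Matchings\<close>

lemma pairwise_disjnt_pairs_of_permutation:
  assumes inj: "inj_on \<sigma> K" and perm: "\<sigma> ` K = K"
    and alt: "\<And>k. k \<in> K \<Longrightarrow> c (\<sigma> k) \<noteq> c k"
  shows "pairwise disjnt ((\<lambda>k. {k, \<sigma> k}) ` {k\<in>K. c k})"
proof (intro pairwise_imageI)
  fix k k' assume k: "k \<in> {k\<in>K. c k}" and k': "k' \<in> {k\<in>K. c k}" and ne: "{k, \<sigma> k} \<noteq> {k', \<sigma> k'}"
  have "\<sigma> k \<in> K" "\<sigma> k' \<in> K" using k k' perm by auto
  then have "c (\<sigma> k) \<noteq> c k'" "c (\<sigma> k') \<noteq> c k" "\<sigma> k \<noteq> \<sigma> k'"
    using alt k k' ne inj by (auto simp: inj_on_def)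
  then show "disjnt {k, \<sigma> k} {k', \<sigma> k'}" using k k' ne by (auto simp: disjnt_def)
qed

lemma covered_by_pairs_of_permutation:
  assumes perm: "\<sigma> ` K = K" and alt: "\<And>k. k \<in> K \<Longrightarrow> c (\<sigma> k) \<noteq> c k"
  shows "K \<subseteq> \<Union>((\<lambda>k. {k, \<sigma> k}) ` {k\<in>K. c k})"
proof
  fix k assume k: "k \<in> K"
  obtain k' where "k' \<in> K" "k = \<sigma> k'" using perm k by blast
  then show "k \<in> \<Union>((\<lambda>k. {k, \<sigma> k}) ` {k\<in>K. c k})" using alt[of k'] k by (cases "c k") auto
qed

text \<open>The functional graph of \<open>\<sigma>\<close> consists of paths, from which a first edge is peeled off, and
  cycles, along which \<open>c\<close> alternates, so that every second edge of a cycle suffices.\<close>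

lemma matching_of_injection:
  fixes c :: "'a \<Rightarrow> bool"
  assumes "finite K" "inj_on \<sigma> K" "\<And>k. k \<in> K \<Longrightarrow> \<sigma> k \<in> K \<Longrightarrow> c (\<sigma> k) \<noteq> c k"
  shows "\<exists>M \<subseteq> (\<lambda>k. {k, \<sigma> k}) ` K. pairwise disjnt M \<and> K \<subseteq> \<Union>M"
  using assms
proof (induction "card K" arbitrary: K rule: less_induct)
  case less
  note finK = less.prems(1) and inj = less.prems(2) and alt = less.prems(3)
  show ?case
  proof (cases "\<sigma> ` K = K")
    case True
    then have "\<And>k. k \<in> K \<Longrightarrow> c (\<sigma> k) \<noteq> c k" using alt by blast
    then show ?thesis
      using pairwise_disjnt_pairs_of_permutation[OF inj True] covered_by_pairs_of_permutation[OF True]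
      by (intro exI[of _ "(\<lambda>k. {k, \<sigma> k}) ` {k\<in>K. c k}"]) auto
  next
    case False
    then obtain k where k: "k \<in> K" "k \<notin> \<sigma> ` K"
      using finK inj by (metis card_image card_subset_eq finite_imageI subsetI)
    define K' where "K' = K - {k, \<sigma> k}"
    have "card K' < card K" unfolding K'_def using k finK by (intro psubset_card_mono) auto
    then have "\<exists>M \<subseteq> (\<lambda>k. {k, \<sigma> k}) ` K'. pairwise disjnt M \<and> K' \<subseteq> \<Union>M"
      by (rule less.hyps) (use finK inj alt in \<open>auto simp: K'_def intro: inj_on_subset\<close>)
    then obtain M where M: "M \<subseteq> (\<lambda>k. {k, \<sigma> k}) ` K'" "pairwise disjnt M" "K' \<subseteq> \<Union>M" by blast
    have "disjnt {k, \<sigma> k} l" if "l \<in> M" for l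
    proof -
      obtain k' where k': "k' \<in> K'" "l = {k', \<sigma> k'}" using M(1) \<open>l \<in> M\<close> by blast
      then have "\<sigma> k' \<noteq> \<sigma> k" using inj k(1) by (auto simp: K'_def inj_on_def)
      then show ?thesis using k k' by (auto simp: K'_def disjnt_def)
    qed
    then have "pairwise disjnt (insert {k, \<sigma> k} M)"
      using M(2) by (auto simp: pairwise_insert disjnt_sym)
    moreover have "insert {k, \<sigma> k} M \<subseteq> (\<lambda>k. {k, \<sigma> k}) ` K" using M(1) k(1) by (auto simp: K'_def)
    moreover have "K \<subseteq> \<Union>(insert {k, \<sigma> k} M)" using M(3) by (auto simp: K'_def)
    ultimately show ?thesis by blast
  qed
qed

text \<open>\<open>M'\<close> arises from the matching \<open>M\<close> by flipping an \<open>N\<close>/\<open>M\<close>-alternating path that starts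
  at the \<open>M\<close>-exposed vertex \<open>f\<close> and ends either at an \<open>M\<close>-exposed vertex \<open>g\<close> or at an
  \<open>N\<close>-exposed vertex \<open>g\<close>.\<close>

definition alternating_exchange :: "'a set set \<Rightarrow> 'a set set \<Rightarrow> 'a \<Rightarrow> 'a set set \<Rightarrow> bool" where
  "alternating_exchange M N f M' \<longleftrightarrow> M' \<subseteq> M \<union> N \<and> pairwise disjnt M' \<and>
     (\<exists>g. g \<notin> \<Union>M \<and> g \<noteq> f \<and> \<Union>M' = insert f (insert g (\<Union>M)) \<or>
          g \<in> \<Union>M \<and> g \<notin> \<Union>N \<and> \<Union>M' = insert f (\<Union>M - {g}))"

lemma alternating_exchangeE:
  assumes "alternating_exchange M N f M'"
  obtains (augment) g where "g \<notin> \<Union>M" "g \<noteq> f" "\<Union>M' = insert f (insert g (\<Union>M))"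
    | (swap) g where "g \<in> \<Union>M" "g \<notin> \<Union>N" "\<Union>M' = insert f (\<Union>M - {g})"
  using assms[unfolded alternating_exchange_def, THEN conjunct2, THEN conjunct2] by (elim exE disjE conjE)

lemma Union_Diff_pairwise_disjnt:
  assumes "pairwise disjnt M" "m \<in> M"
  shows "\<Union>(M - {m}) = \<Union>M - m"
  using assms unfolding pairwise_def disjnt_def by blast

lemma alternating_exchange_augment:
  assumes "pairwise disjnt M" "l \<in> N" "l = {f, v}" "f \<noteq> v" "f \<notin> \<Union>M" "v \<notin> \<Union>M"
  shows "alternating_exchange M N f (insert l M)"
proof -
  have "pairwise disjnt (insert l M)" using assms by (auto simp: pairwise_insert disjnt_def)
  moreover have "\<Union>(insert l M) = insert f (insert v (\<Union>M))" using assms(3) by auto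
  ultimately show ?thesis
    using assms(2,4,6) unfolding alternating_exchange_def by (intro conjI exI[of _ v] disjI1) auto
qed

lemma alternating_exchange_swap:
  assumes M: "pairwise disjnt M" "m \<in> M" "m = {v\<^sub>1, v\<^sub>2}" "v\<^sub>1 \<noteq> v\<^sub>2"
    and N: "l \<in> N" "l = {f, v\<^sub>1}" and "f \<notin> \<Union>M" "v\<^sub>2 \<notin> \<Union>N"
  shows "alternating_exchange M N f (insert l (M - {m}))"
proof -
  have UM: "\<Union>(M - {m}) = \<Union>M - {v\<^sub>1, v\<^sub>2}"
    using Union_Diff_pairwise_disjnt[OF M(1,2)] M(3) by simp
  then have "pairwise disjnt (insert l (M - {m}))"
    using pairwise_subset[OF M(1)] N(2) \<open>f \<notin> \<Union>M\<close> by (auto simp: pairwise_insert disjnt_def)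
  moreover have "v\<^sub>2 \<noteq> f" "v\<^sub>2 \<in> \<Union>M" using M(2,3) \<open>f \<notin> \<Union>M\<close> by auto
  moreover have "\<Union>(insert l (M - {m})) = insert f (\<Union>M - {v\<^sub>2})"
    using UM N(2) M(2,3,4) calculation(2) by auto
  ultimately show ?thesis
    using N(1) \<open>v\<^sub>2 \<notin> \<Union>N\<close> unfolding alternating_exchange_def by (intro conjI exI[of _ v\<^sub>2] disjI2) auto
qed

lemma alternating_exchange_extend:
  assumes M: "pairwise disjnt M" "m \<in> M" "m = {v\<^sub>1, v\<^sub>2}" "v\<^sub>1 \<noteq> v\<^sub>2"
    and N: "pairwise disjnt N" "l \<in> N" "l = {f, v\<^sub>1}" "f \<noteq> v\<^sub>1"
    and f: "f \<notin> \<Union>M"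
    and M\<^sub>0: "alternating_exchange (M - {m}) (N - {l}) v\<^sub>2 M\<^sub>0"
  shows "alternating_exchange M N f (insert l M\<^sub>0)"
proof -
  have UM: "\<Union>(M - {m}) = \<Union>M - {v\<^sub>1, v\<^sub>2}"
    using Union_Diff_pairwise_disjnt[OF M(1,2)] M(3) by simp
  have UN: "\<Union>(N - {l}) = \<Union>N - {f, v\<^sub>1}"
    using Union_Diff_pairwise_disjnt[OF N(1,2)] N(3) by simp
  have M\<^sub>0_sub: "M\<^sub>0 \<subseteq> (M - {m}) \<union> (N - {l})" and M\<^sub>0_disj: "pairwise disjnt M\<^sub>0"
    using M\<^sub>0[unfolded alternating_exchange_def] by simp_all
  then have fresh: "f \<notin> \<Union>M\<^sub>0" "v\<^sub>1 \<notin> \<Union>M\<^sub>0" using UM UN f by blast+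
  then have disj: "pairwise disjnt (insert l M\<^sub>0)"
    using M\<^sub>0_disj N(3) by (auto simp: pairwise_insert disjnt_def)
  have sub: "insert l M\<^sub>0 \<subseteq> M \<union> N" using M\<^sub>0_sub N(2) by blast
  have v: "v\<^sub>1 \<in> \<Union>M" "v\<^sub>2 \<in> \<Union>M" using M(2,3) by auto
  from M\<^sub>0 obtain g where "g \<notin> \<Union>M \<and> g \<noteq> f \<and> \<Union>(insert l M\<^sub>0) = insert f (insert g (\<Union>M)) \<or>
     g \<in> \<Union>M \<and> g \<notin> \<Union>N \<and> \<Union>(insert l M\<^sub>0) = insert f (\<Union>M - {g})"
  proof (cases rule: alternating_exchangeE)
    case (augment g)
    then have "g \<noteq> f" "g \<noteq> v\<^sub>1" using fresh by auto
    moreover have "\<Union>(insert l M\<^sub>0) = insert f (insert g (\<Union>M))" using augment(3) UM N(3) v by auto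
    ultimately show ?thesis using that augment(1,2) UM by auto
  next
    case (swap g)
    then have "g \<noteq> f" "g \<noteq> v\<^sub>1" "g \<noteq> v\<^sub>2" using UM f by auto
    moreover have "\<Union>(insert l M\<^sub>0) = insert f (\<Union>M - {g})" using swap(3) UM N(3) v calculation by auto
    ultimately show ?thesis using that swap(1,2) UM UN by auto
  qed
  then show ?thesis unfolding alternating_exchange_def by (intro conjI exI) (rule sub, rule disj)
qed

lemma card_2_memE:
  assumes "card l = 2" "x \<in> l"
  obtains y where "l = {x, y}" "x \<noteq> y"
  using assms by (auto simp: card_2_iff)

lemma alternating_exchange_exists:
  assumes "finite N" "pairwise disjnt M" "pairwise disjnt N" "\<forall>l\<in>M \<union> N. card l = 2"
    and "f \<in> \<Union>N" "f \<notin> \<Union>M"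
  shows "\<exists>M'. alternating_exchange M N f M'"
  using assms
proof (induction "card N" arbitrary: M N f rule: less_induct)
  case less
  note finN = less.prems(1) and M = less.prems(2) and N = less.prems(3) and pairs = less.prems(4)
    and f = less.prems(5,6)
  obtain l where "l \<in> N" "f \<in> l" using f(1) by blast
  moreover obtain v\<^sub>1 where "l = {f, v\<^sub>1}" "f \<noteq> v\<^sub>1"
    using card_2_memE[OF _ \<open>f \<in> l\<close>] pairs \<open>l \<in> N\<close> by blast
  ultimately have l: "l \<in> N" "l = {f, v\<^sub>1}" "f \<noteq> v\<^sub>1" by blast+
  show ?case
  proof (cases "v\<^sub>1 \<in> \<Union>M")
    case False
    then show ?thesis using alternating_exchange_augment[OF M l f(2)] by blast
  next
    case True
    then obtain m where "m \<in> M" "v\<^sub>1 \<in> m" by blast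
    moreover obtain v\<^sub>2 where "m = {v\<^sub>1, v\<^sub>2}" "v\<^sub>1 \<noteq> v\<^sub>2"
      using card_2_memE[OF _ \<open>v\<^sub>1 \<in> m\<close>] pairs \<open>m \<in> M\<close> by blast
    ultimately have m: "m \<in> M" "m = {v\<^sub>1, v\<^sub>2}" "v\<^sub>1 \<noteq> v\<^sub>2" by blast+
    show ?thesis
    proof (cases "v\<^sub>2 \<in> \<Union>N")
      case False
      then show ?thesis using alternating_exchange_swap[OF M m l(1,2) f(2)] by blast
    next
      case True
      have "card (N - {l}) < card N" using l(1) finN by (rule card_Diff1_less[rotated])
      moreover have "v\<^sub>2 \<in> \<Union>(N - {l})" "v\<^sub>2 \<notin> \<Union>(M - {m})"
        using True l(2) m f(2) Union_Diff_pairwise_disjnt[OF M m(1)] by auto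
      moreover have "pairwise disjnt (M - {m})" "pairwise disjnt (N - {l})"
        using pairwise_subset M N by blast+
      moreover have "finite (N - {l})" "\<forall>l'\<in>(M - {m}) \<union> (N - {l}). card l' = 2"
        using finN pairs by auto
      ultimately have "\<exists>M\<^sub>0. alternating_exchange (M - {m}) (N - {l}) v\<^sub>2 M\<^sub>0"
        by (intro less.hyps)
      then obtain M\<^sub>0 where "alternating_exchange (M - {m}) (N - {l}) v\<^sub>2 M\<^sub>0" ..
      then have "alternating_exchange M N f (insert l M\<^sub>0)"
        by (rule alternating_exchange_extend[OF M m N l f(2)])
      then show ?thesis ..
    qed
  qed
qed

section \<open>Schedules of maximum weight\<close>

lemma simple_graph_finite_vertices: "simple_graph V E \<Longrightarrow> finite V"
  unfolding simple_graph_def by blast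

lemma simple_graph_edgeE:
  assumes "simple_graph V E" "l \<in> E"
  obtains a b where "a \<noteq> b" "a \<in> V" "b \<in> V" "l = {a, b}"
  using assms unfolding simple_graph_def by meson

lemma simple_graph_edge_subset: "simple_graph V E \<Longrightarrow> l \<in> E \<Longrightarrow> l \<subseteq> V"
  by (metis simple_graph_edgeE empty_subsetI insert_subset)

lemma simple_graph_finite_edges:
  assumes "simple_graph V E" shows "finite E"
proof -
  have "E \<subseteq> Pow V" using simple_graph_edge_subset[OF assms] by blast
  then show ?thesis
    using simple_graph_finite_vertices[OF assms] by (rule finite_subset[OF _ finite_Pow_iff[THEN iffD2]])
qed

lemma simple_graph_card_edge: "simple_graph V E \<Longrightarrow> l \<in> E \<Longrightarrow> card l = 2"
  by (metis simple_graph_edgeE card_2_iff)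

lemma covered_iff_in_Union: "covered M i \<longleftrightarrow> i \<in> \<Union>M"
  unfolding covered_def by blast

lemma feasible_iff: "feasible E q M \<longleftrightarrow> M \<subseteq> E \<and> pairwise disjnt M \<and> (\<forall>l\<in>M. 0 < q l)"
  by (auto simp: feasible_def matching_def pairwise_def disjnt_def)

lemma Union_feasible_subset: "simple_graph V E \<Longrightarrow> feasible E q M \<Longrightarrow> \<Union>M \<subseteq> V"
  using simple_graph_edge_subset unfolding feasible_iff by blast

lemma finite_Union_feasible: "simple_graph V E \<Longrightarrow> feasible E q M \<Longrightarrow> finite (\<Union>M)"
  by (rule finite_subset[OF Union_feasible_subset simple_graph_finite_vertices])

lemma covered_nodes_eq_Union: "simple_graph V E \<Longrightarrow> feasible E q M \<Longrightarrow> {i\<in>V. covered M i} = \<Union>M"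
  using Union_feasible_subset by (fastforce simp: covered_iff_in_Union)

lemma sum_matched_links_at:
  assumes "finite E" "matching E M"
  shows "(\<Sum>l\<in>links_at E i. if l \<in> M then 1 else 0 :: nat) = (if i \<in> \<Union>M then 1 else 0)"
proof (cases "i \<in> \<Union>M")
  case True
  then obtain m where m: "m \<in> M" "i \<in> m" by blast
  have "m \<in> links_at E i" using m assms(2) by (auto simp: links_at_def matching_def)
  moreover have "l \<in> M \<longleftrightarrow> l = m" if "l \<in> links_at E i" for l
    using that m assms(2) by (auto simp: links_at_def matching_def)
  moreover have "finite (links_at E i)" using assms(1) by (simp add: links_at_def)
  ultimately show ?thesis using True by (simp cong: sum.cong)
next
  case False
  then have "l \<notin> M" if "l \<in> links_at E i" for l using that by (auto simp: links_at_def)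
  then show ?thesis using False by simp
qed

definition max_weight_schedule :: "'v set set \<Rightarrow> ('v set \<Rightarrow> nat) \<Rightarrow> ('v \<Rightarrow> nat) \<Rightarrow> 'v set set \<Rightarrow> bool" where
  "max_weight_schedule E q w M \<longleftrightarrow>
     feasible E q M \<and> (\<forall>M'. feasible E q M' \<longrightarrow> sum w (\<Union>M') \<le> sum w (\<Union>M))"

lemma max_weight_schedule_no_free_link:
  assumes sg: "simple_graph V E" and M: "max_weight_schedule E q w M"
    and ab: "{a, b} \<in> E" "0 < q {a, b}" and w: "0 < w a"
  shows "a \<in> \<Union>M \<or> b \<in> \<Union>M"
proof (rule ccontr)
  assume free: "\<not> (a \<in> \<Union>M \<or> b \<in> \<Union>M)"
  have "a \<noteq> b" using simple_graph_card_edge[OF sg ab(1)] by (cases "a = b") auto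
  have "feasible E q M" using M by (simp add: max_weight_schedule_def)
  moreover have "disjnt {a, b} l" if "l \<in> M" for l using free that by (auto simp: disjnt_def)
  ultimately have "feasible E q (insert {a, b} M)"
    using ab by (auto simp: feasible_iff pairwise_insert disjnt_sym)
  then have "sum w (\<Union>(insert {a, b} M)) \<le> sum w (\<Union>M)"
    using M unfolding max_weight_schedule_def by blast
  moreover have "finite (\<Union>M)"
    using finite_Union_feasible[OF sg \<open>feasible E q M\<close>] .
  moreover have "\<Union>(insert {a, b} M) = insert a (insert b (\<Union>M))" by simp
  ultimately show False using free \<open>a \<noteq> b\<close> w by simp
qed

lemma max_weight_schedule_covers_heaviest:
  assumes sg: "simple_graph V E" and M: "max_weight_schedule E q w M"
    and N: "feasible E q N" "K \<subseteq> \<Union>N"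
    and f: "f \<in> K" "0 < w f" and heaviest: "\<And>v. v \<in> V \<Longrightarrow> w f \<le> w v \<Longrightarrow> v \<in> K"
  shows "f \<in> \<Union>M"
proof (rule ccontr)
  assume "f \<notin> \<Union>M"
  have feasM: "feasible E q M" using M by (simp add: max_weight_schedule_def)
  have "finite N"
    using N(1) unfolding feasible_iff by (blast intro: finite_subset[OF _ simple_graph_finite_edges[OF sg]])
  moreover have "M \<union> N \<subseteq> E" using feasM N(1) by (simp add: feasible_iff)
  then have "\<forall>l\<in>M \<union> N. card l = 2" by (auto intro: simple_graph_card_edge[OF sg])
  moreover have "pairwise disjnt M" "pairwise disjnt N" using feasM N(1) by (simp_all add: feasible_iff)
  moreover have "f \<in> \<Union>N" using N(2) f(1) by blast
  ultimately have "\<exists>M'. alternating_exchange M N f M'"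
    using \<open>f \<notin> \<Union>M\<close> by (intro alternating_exchange_exists)
  then obtain M' where M': "alternating_exchange M N f M'" ..
  then have "feasible E q M'"
    using feasM N(1) by (auto simp: alternating_exchange_def feasible_iff)
  then have le: "sum w (\<Union>M') \<le> sum w (\<Union>M)" using M by (simp add: max_weight_schedule_def)
  have fin: "finite (\<Union>M)" using finite_Union_feasible[OF sg feasM] .
  from M' show False
  proof (cases rule: alternating_exchangeE)
    case (augment g)
    then show False using le fin f(2) \<open>f \<notin> \<Union>M\<close> by simp
  next
    case (swap g)
    then have "w f + sum w (\<Union>M) = w g + sum w (\<Union>M')"
      using fin \<open>f \<notin> \<Union>M\<close> by (simp add: sum.remove)
    then have "w f \<le> w g" using le by simp
    then have "g \<in> K" using heaviest Union_feasible_subset[OF sg feasM] swap(1) by blast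
    then show False using swap(2) N(2) by blast
  qed
qed

section \<open>Serving all nodes of maximum load\<close>

lemma nodeQ_le_maxQ: "finite V \<Longrightarrow> i \<in> V \<Longrightarrow> nodeQ E q i \<le> maxQ V E q"
  unfolding maxQ_def by simp

lemma maxQ_le:
  "finite V \<Longrightarrow> V \<noteq> {} \<Longrightarrow> (\<And>v. v \<in> V \<Longrightarrow> nodeQ E q v \<le> D) \<Longrightarrow> maxQ V E q \<le> D"
  unfolding maxQ_def by simp

lemma maxQ_eqI:
  "finite V \<Longrightarrow> i \<in> V \<Longrightarrow> nodeQ E q i = D \<Longrightarrow> (\<And>v. v \<in> V \<Longrightarrow> nodeQ E q v \<le> D) \<Longrightarrow> maxQ V E q = D"
  using nodeQ_le_maxQ maxQ_le by (metis empty_iff le_antisym)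

definition active_nbrs :: "'v set set \<Rightarrow> ('v set \<Rightarrow> nat) \<Rightarrow> 'v \<Rightarrow> 'v set" where
  "active_nbrs E q a = {b. {a, b} \<in> E \<and> 0 < q {a, b}}"

lemma active_nbrs_sym: "b \<in> active_nbrs E q a \<longleftrightarrow> a \<in> active_nbrs E q b"
  by (simp add: active_nbrs_def insert_commute)

lemma active_nbrs_subset: "simple_graph V E \<Longrightarrow> active_nbrs E q a \<subseteq> V"
  unfolding active_nbrs_def using simple_graph_edge_subset by blast

lemma finite_active_nbrs: "simple_graph V E \<Longrightarrow> finite (active_nbrs E q a)"
  by (rule finite_subset[OF active_nbrs_subset simple_graph_finite_vertices])

lemma nodeQ_eq_sum_active_nbrs:
  assumes sg: "simple_graph V E"
  shows "nodeQ E q a = (\<Sum>b\<in>active_nbrs E q a. q {a, b})"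
proof -
  define B where "B = {b. {a, b} \<in> E}"
  have "finite B" unfolding B_def using simple_graph_edge_subset[OF sg]
    by (blast intro: finite_subset[OF _ simple_graph_finite_vertices[OF sg]])
  have "links_at E a \<subseteq> (\<lambda>b. {a, b}) ` B"
  proof
    fix l assume "l \<in> links_at E a"
    then have "l \<in> E" "a \<in> l" by (auto simp: links_at_def)
    then obtain b where "l = {a, b}"
      using simple_graph_edgeE[OF sg] by (metis insert_commute insertE singletonD)
    then show "l \<in> (\<lambda>b. {a, b}) ` B" using \<open>l \<in> E\<close> by (auto simp: B_def)
  qed
  then have links: "links_at E a = (\<lambda>b. {a, b}) ` B" by (auto simp: B_def links_at_def)
  have "inj_on (\<lambda>b. {a, b}) B" by (auto simp: inj_on_def doubleton_eq_iff)
  then have "nodeQ E q a = (\<Sum>b\<in>B. q {a, b})" by (simp add: nodeQ_def links sum.reindex)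
  also have "\<dots> = (\<Sum>b\<in>active_nbrs E q a. q {a, b})"
    using \<open>finite B\<close> by (intro sum.mono_neutral_right) (auto simp: B_def active_nbrs_def)
  finally show ?thesis .
qed

text \<open>Double counting the packets on the active links between \<open>S\<close> and its active neighbourhood
  \<open>N(S)\<close>: \<open>D |S| \<le> (\<Sum>b\<in>N(S). Q\<^sub>b) \<le> D |N(S)|\<close>.\<close>

lemma card_le_card_active_nbrs:
  assumes sg: "simple_graph V E" and S: "S \<subseteq> V"
    and le: "\<And>v. v \<in> V \<Longrightarrow> nodeQ E q v \<le> D"
    and eq: "\<And>s. s \<in> S \<Longrightarrow> nodeQ E q s = D" and "0 < D"
  shows "card S \<le> card (\<Union>(active_nbrs E q ` S))"
proof -
  define NS where "NS = \<Union>(active_nbrs E q ` S)"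
  have NS: "NS \<subseteq> V" unfolding NS_def using active_nbrs_subset[OF sg] by blast
  have fin: "finite S" "finite NS"
    using S NS by (auto intro: finite_subset[OF _ simple_graph_finite_vertices[OF sg]])
  define c where "c s b = (if b \<in> active_nbrs E q s then q {s, b} else 0)" for s b
  have "D * card S = (\<Sum>s\<in>S. nodeQ E q s)" using eq by simp
  also have "\<dots> = (\<Sum>s\<in>S. \<Sum>b\<in>NS. c s b)"
  proof (rule sum.cong[OF refl])
    fix s assume "s \<in> S"
    then have "{b \<in> NS. b \<in> active_nbrs E q s} = active_nbrs E q s" by (auto simp: NS_def)
    moreover have "(\<Sum>b\<in>NS. c s b) = (\<Sum>b\<in>{b \<in> NS. b \<in> active_nbrs E q s}. q {s, b})"
      by (simp add: c_def sum.inter_filter[OF fin(2)])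
    ultimately show "nodeQ E q s = (\<Sum>b\<in>NS. c s b)" by (simp add: nodeQ_eq_sum_active_nbrs[OF sg])
  qed
  also have "\<dots> = (\<Sum>b\<in>NS. \<Sum>s\<in>S. c s b)" by (rule sum.swap)
  also have "\<dots> \<le> (\<Sum>b\<in>NS. nodeQ E q b)"
  proof (rule sum_mono)
    fix b assume "b \<in> NS"
    have "(\<Sum>s\<in>S. c s b) = (\<Sum>s\<in>{s\<in>S. s \<in> active_nbrs E q b}. q {b, s})"
      by (simp add: c_def sum.inter_filter[OF fin(1)] active_nbrs_sym insert_commute)
    also have "\<dots> \<le> (\<Sum>s\<in>active_nbrs E q b. q {b, s})"
      by (rule sum_mono2[OF finite_active_nbrs[OF sg]]) auto
    finally show "(\<Sum>s\<in>S. c s b) \<le> nodeQ E q b" by (simp add: nodeQ_eq_sum_active_nbrs[OF sg])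
  qed
  also have "\<dots> \<le> card NS * D" using sum_bounded_above[of NS "nodeQ E q" D] le NS by auto
  finally show ?thesis using \<open>0 < D\<close> by (simp add: NS_def mult.commute)
qed

lemma feasible_schedule_covering:
  fixes c :: "'v \<Rightarrow> bool"
  assumes sg: "simple_graph V E" and K: "K \<subseteq> V"
    and le: "\<And>v. v \<in> V \<Longrightarrow> nodeQ E q v \<le> D"
    and eq: "\<And>s. s \<in> K \<Longrightarrow> nodeQ E q s = D" and "0 < D"
    and alt: "\<And>a b. a \<in> K \<Longrightarrow> b \<in> K \<Longrightarrow> {a, b} \<in> E \<Longrightarrow> 0 < q {a, b} \<Longrightarrow> c a \<noteq> c b"
  shows "\<exists>N. feasible E q N \<and> K \<subseteq> \<Union>N"
proof -
  have "finite K" using K by (rule finite_subset[OF _ simple_graph_finite_vertices[OF sg]])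
  moreover have "card S \<le> card (\<Union>(active_nbrs E q ` S))" if "S \<subseteq> K" for S
    using that K by (intro card_le_card_active_nbrs[OF sg _ le eq \<open>0 < D\<close>]) auto
  ultimately have "\<exists>\<sigma>. inj_on \<sigma> K \<and> (\<forall>a\<in>K. \<sigma> a \<in> active_nbrs E q a)"
    using finite_active_nbrs[OF sg] by (intro Hall_marriage)
  then obtain \<sigma> where \<sigma>: "inj_on \<sigma> K" "\<forall>a\<in>K. \<sigma> a \<in> active_nbrs E q a" by blast
  have "c (\<sigma> k) \<noteq> c k" if "k \<in> K" "\<sigma> k \<in> K" for k
    using alt[of k "\<sigma> k"] \<sigma>(2) that by (auto simp: active_nbrs_def)
  with \<open>finite K\<close> \<sigma>(1) have "\<exists>N \<subseteq> (\<lambda>k. {k, \<sigma> k}) ` K. pairwise disjnt N \<and> K \<subseteq> \<Union>N"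
    by (rule matching_of_injection)
  then obtain N where N: "N \<subseteq> (\<lambda>k. {k, \<sigma> k}) ` K" "pairwise disjnt N" "K \<subseteq> \<Union>N" by blast
  then have "feasible E q N" using \<sigma>(2) by (auto simp: feasible_iff active_nbrs_def)
  then show ?thesis using N(3) by blast
qed

section \<open>The NSB algorithm\<close>

lemma nodeQ_le_nsb_w: "nodeQ E q i \<le> nsb_w V E S k q i"
  by (simp add: nsb_w_def Uind_def Rind_def)

lemma nsb_w_le_double: "nsb_w V E S k q i \<le> 2 * nodeQ E q i"
  by (simp add: nsb_w_def)

lemma Uind_eq_0_if_nsb_w_double:
  "2 * nodeQ E q i \<le> nsb_w V E S k q i \<Longrightarrow> 0 < nodeQ E q i \<Longrightarrow> Uind S k i = 0"
  by (auto simp: nsb_w_def Uind_def Rind_def split: if_splits)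

lemma heavy_if_nodeQ_eq_maxQ:
  assumes "nodeQ E q i = maxQ V E q" shows "heavy V E q i"
proof -
  have "(real (card V) - 1) / real (card V) \<le> 1" "0 \<le> (real (card V) - 1) / real (card V)"
    by (cases "card V = 0"; simp)+
  then show ?thesis unfolding heavy_def assms by (intro mult_left_le_one_le) auto
qed

lemma nsb_w_max_node:
  "nodeQ E q i = maxQ V E q \<Longrightarrow> Uind S k i = 0 \<Longrightarrow> nsb_w V E S k q i = 2 * nodeQ E q i"
  by (simp add: nsb_w_def heavy_if_nodeQ_eq_maxQ)

lemma Uind_3k_Suc_eq_0_iff: "Uind S (Suc (3 * k)) i = 0 \<longleftrightarrow> \<not> covered (S (3 * k)) i"
  by (simp add: Uind_def Rind_def)

lemma Uind_3k_Suc_Suc_eq_0_iff: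
  "Uind S (Suc (Suc (3 * k))) i = 0 \<longleftrightarrow> \<not> (covered (S (3 * k)) i \<and> covered (S (Suc (3 * k))) i)"
proof -
  have "Suc (Suc (3 * k)) mod 3 = 2" by presburger
  then show ?thesis by (simp add: Uind_def Rind_def)
qed

locale nsb_system =
  fixes V :: "'v set" and E :: "'v set set" and Q :: "nat \<Rightarrow> 'v set \<Rightarrow> nat" and S :: "nat \<Rightarrow> 'v set set"
  assumes graph: "simple_graph V E" and nonempty: "V \<noteq> {}" and run: "nsb_run V E Q S"
begin

lemma finite_V: "finite V"
  using graph by (rule simple_graph_finite_vertices)

lemma feasible_schedule: "feasible E (Q k) (S k)"
  using run by (simp add: nsb_run_def)

lemma schedule_max_weight: "max_weight_schedule E (Q k) (nsb_w V E S k (Q k)) (S k)"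
proof -
  have "nsb_weight V E S k (Q k) M \<le> nsb_weight V E S k (Q k) (S k)" if "feasible E (Q k) M" for M
    using run that by (simp add: nsb_run_def)
  then show ?thesis using feasible_schedule[of k] covered_nodes_eq_Union[OF graph]
    by (simp add: max_weight_schedule_def nsb_weight_def)
qed

lemma Q_Suc: "Q (Suc k) l = Q k l - (if l \<in> S k then 1 else 0)"
  using run by (simp add: nsb_run_def)

lemma Q_Suc_le: "Q (Suc k) l \<le> Q k l"
  by (simp add: Q_Suc)

lemma nodeQ_Suc: "nodeQ E (Q (Suc k)) i = nodeQ E (Q k) i - (if covered (S k) i then 1 else 0)"
proof -
  have "(if l \<in> S k then 1 else 0) \<le> Q k l" for l
    using feasible_schedule[of k] by (auto simp: feasible_iff Suc_le_eq)
  then have "nodeQ E (Q (Suc k)) i =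
      nodeQ E (Q k) i - (\<Sum>l\<in>links_at E i. if l \<in> S k then 1 else 0)"
    unfolding nodeQ_def Q_Suc by (rule sum_subtractf_nat)
  then show ?thesis
    using sum_matched_links_at[OF simple_graph_finite_edges[OF graph]] feasible_schedule[of k]
    by (simp add: feasible_def covered_iff_in_Union)
qed

lemma nodeQ_Suc_le: "nodeQ E (Q (Suc k)) i \<le> nodeQ E (Q k) i"
  by (simp add: nodeQ_Suc)

lemma free_link_served:
  assumes "{a, b} \<in> E" "0 < Q t {a, b}" "0 < nodeQ E (Q t) a"
  shows "covered (S t) a \<or> covered (S t) b"
  using max_weight_schedule_no_free_link[OF graph schedule_max_weight assms(1,2)]
    assms(3) nodeQ_le_nsb_w[of E "Q t" a V S t] by (simp add: covered_iff_in_Union)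

text \<open>The nodes whose NSB weight in slot \<open>t\<close> is \<open>2 \<Delta>(t)\<close>, the largest possible.\<close>

definition top_nodes :: "nat \<Rightarrow> 'v set" where
  "top_nodes t = {u \<in> V. nodeQ E (Q t) u = maxQ V E (Q t) \<and> Uind S t u = 0}"

lemma top_node_served:
  fixes c :: "'v \<Rightarrow> bool"
  assumes v: "v \<in> top_nodes t" and pos: "0 < maxQ V E (Q t)"
    and alt: "\<And>a b. a \<in> top_nodes t \<Longrightarrow> b \<in> top_nodes t \<Longrightarrow> {a, b} \<in> E \<Longrightarrow> 0 < Q t {a, b}
      \<Longrightarrow> c a \<noteq> c b"
  shows "covered (S t) v"
proof -
  define D where "D = maxQ V E (Q t)"
  define w where "w = nsb_w V E S t (Q t)"
  have le: "nodeQ E (Q t) u \<le> D" if "u \<in> V" for u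
    using nodeQ_le_maxQ[OF finite_V that] by (simp add: D_def)
  have wv: "w v = 2 * D" using v by (simp add: top_nodes_def w_def D_def nsb_w_max_node)
  have heaviest: "u \<in> top_nodes t" if "u \<in> V" "w v \<le> w u" for u
  proof -
    have "w u \<le> 2 * nodeQ E (Q t) u" unfolding w_def by (rule nsb_w_le_double)
    then have "nodeQ E (Q t) u = D" "2 * nodeQ E (Q t) u \<le> w u"
      using le[OF that(1)] that(2) wv by linarith+
    then have "Uind S t u = 0"
      using pos Uind_eq_0_if_nsb_w_double[of E "Q t" u V S t] by (simp add: w_def D_def)
    then show ?thesis using that(1) \<open>nodeQ E (Q t) u = D\<close> by (simp add: top_nodes_def D_def)
  qed
  have "\<exists>N. feasible E (Q t) N \<and> top_nodes t \<subseteq> \<Union>N"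
  proof (rule feasible_schedule_covering[OF graph _ le])
    show "top_nodes t \<subseteq> V" "\<And>u. u \<in> top_nodes t \<Longrightarrow> nodeQ E (Q t) u = D"
      by (auto simp: top_nodes_def D_def)
  qed (use pos alt in \<open>simp_all add: D_def\<close>)
  then obtain N where N: "feasible E (Q t) N" "top_nodes t \<subseteq> \<Union>N" by blast
  have "0 < w v" using wv pos by (simp add: D_def)
  with v have "v \<in> \<Union>(S t)" using heaviest
    unfolding w_def by (rule max_weight_schedule_covers_heaviest[OF graph schedule_max_weight N])
  then show ?thesis by (simp add: covered_iff_in_Union)
qed

lemma max_node_served_within_two_slots:
  assumes i: "i \<in> V" "nodeQ E (Q (3 * k)) i = maxQ V E (Q (3 * k))" and pos: "0 < maxQ V E (Q (3 * k))"
  shows "covered (S (3 * k)) i \<or> covered (S (Suc (3 * k))) i"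
proof (rule ccontr)
  define p where "p = 3 * k"
  define D where "D = maxQ V E (Q p)"
  assume "\<not> (covered (S (3 * k)) i \<or> covered (S (Suc (3 * k))) i)"
  then have unserved: "\<not> covered (S p) i" "\<not> covered (S (Suc p)) i" by (simp_all add: p_def)
  have "nodeQ E (Q (Suc p)) u \<le> D" if "u \<in> V" for u
    using nodeQ_Suc_le nodeQ_le_maxQ[OF finite_V that] le_trans by (fastforce simp: D_def)
  moreover have "nodeQ E (Q (Suc p)) i = D" using i unserved(1) by (simp add: nodeQ_Suc p_def D_def)
  ultimately have max1: "maxQ V E (Q (Suc p)) = D" using i(1) by (intro maxQ_eqI[OF finite_V])
  have "i \<in> top_nodes (Suc p)"
    using i(1) unserved(1) \<open>nodeQ E (Q (Suc p)) i = D\<close> max1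
    by (simp add: top_nodes_def p_def Uind_3k_Suc_eq_0_iff)
  moreover have False
    if "a \<in> top_nodes (Suc p)" "b \<in> top_nodes (Suc p)" "{a, b} \<in> E" "0 < Q (Suc p) {a, b}" for a b
  proof -
    have "\<not> covered (S p) a" "\<not> covered (S p) b" "nodeQ E (Q (Suc p)) a = D"
      using that(1,2) max1 by (simp_all add: top_nodes_def p_def Uind_3k_Suc_eq_0_iff)
    moreover have "0 < Q p {a, b}" using that(4) Q_Suc_le[of p "{a, b}"] by linarith
    moreover have "0 < nodeQ E (Q p) a"
      using \<open>nodeQ E (Q (Suc p)) a = D\<close> nodeQ_Suc_le[of p a] pos by (simp add: D_def p_def)
    ultimately show ?thesis using free_link_served[OF that(3)] by blast
  qed
  ultimately have "covered (S (Suc p)) i"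
    using pos max1 by (intro top_node_served[where c = "\<lambda>_. True"]) (auto simp: D_def p_def)
  then show False using unserved(2) by blast
qed

lemma nodeQ_after_two_slots_le:
  assumes "v \<in> V" "0 < maxQ V E (Q (3 * k))"
  shows "nodeQ E (Q (Suc (Suc (3 * k)))) v \<le> maxQ V E (Q (3 * k)) - 1"
  using nodeQ_le_maxQ[OF finite_V assms(1), of E "Q (3 * k)"]
    max_node_served_within_two_slots[OF assms(1) _ assms(2)]
  by (cases "nodeQ E (Q (3 * k)) v = maxQ V E (Q (3 * k))") (auto simp: nodeQ_Suc)

lemma nodeQ_after_frame_le:
  assumes v: "v \<in> V" and D: "2 \<le> maxQ V E (Q (3 * k))"
  shows "nodeQ E (Q (3 * k + 3)) v \<le> maxQ V E (Q (3 * k)) - 2"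
proof (rule ccontr)
  define p where "p = 3 * k"
  define D where "D = maxQ V E (Q p)"
  assume "\<not> ?thesis"
  moreover have "3 * k + 3 = Suc (Suc (Suc p))" by (simp add: p_def)
  ultimately have n2v: "nodeQ E (Q (Suc (Suc p))) v = D - 1"
    and unserved: "\<not> covered (S (Suc (Suc p))) v" and "\<not> (covered (S p) v \<and> covered (S (Suc p)) v)"
    using nodeQ_le_maxQ[OF finite_V v, of E "Q p"] nodeQ_after_two_slots_le[OF v, of k] D
    by (auto simp: nodeQ_Suc p_def D_def split: if_splits)
  have le2: "nodeQ E (Q (Suc (Suc p))) u \<le> D - 1" if "u \<in> V" for u
    using nodeQ_after_two_slots_le[OF that] D by (simp add: p_def D_def)
  have max2: "maxQ V E (Q (Suc (Suc p))) = D - 1" using v n2v le2 by (rule maxQ_eqI[OF finite_V])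
  have "v \<in> top_nodes (Suc (Suc p))"
    using v n2v max2 \<open>\<not> (covered (S p) v \<and> covered (S (Suc p)) v)\<close>
    by (simp add: top_nodes_def p_def Uind_3k_Suc_Suc_eq_0_iff)
  moreover have "covered (S (Suc p)) a \<noteq> covered (S (Suc p)) b"
    if ab: "a \<in> top_nodes (Suc (Suc p))" "b \<in> top_nodes (Suc (Suc p))" "{a, b} \<in> E"
      "0 < Q (Suc (Suc p)) {a, b}" for a b
  proof
    assume same: "covered (S (Suc p)) a = covered (S (Suc p)) b"
    have "\<not> (covered (S p) a \<and> covered (S (Suc p)) a)" "\<not> (covered (S p) b \<and> covered (S (Suc p)) b)"
      "nodeQ E (Q (Suc (Suc p))) a = D - 1"
      using ab(1,2) max2 by (simp_all add: top_nodes_def p_def Uind_3k_Suc_Suc_eq_0_iff)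
    moreover have "0 < Q (Suc p) {a, b}" "0 < Q p {a, b}"
      using ab(4) Q_Suc_le[of "Suc p" "{a, b}"] Q_Suc_le[of p "{a, b}"] by linarith+
    moreover have "0 < nodeQ E (Q (Suc p)) a" "0 < nodeQ E (Q p) a"
      using \<open>nodeQ E (Q (Suc (Suc p))) a = D - 1\<close> nodeQ_Suc_le[of "Suc p" a] nodeQ_Suc_le[of p a] D
      by (simp_all add: D_def p_def)
    ultimately show False
      using free_link_served[OF ab(3), of p] free_link_served[OF ab(3), of "Suc p"] same by blast
  qed
  ultimately have "covered (S (Suc (Suc p))) v"
    using D max2 by (intro top_node_served) (simp_all add: D_def p_def)
  then show False using unserved by blast
qed

end

theorem proposition1:
  fixes V :: "'v set" and E :: "'v set set"
    and Q :: "nat \<Rightarrow> 'v set \<Rightarrow> nat" and S :: "nat \<Rightarrow> 'v set set" and k' :: nat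
  assumes "simple_graph V E" and "V \<noteq> {}"
    and "nsb_run V E Q S"
    and "maxQ V E (Q (3 * k')) \<ge> 2"
  shows "maxQ V E (Q (3 * k' + 3)) \<le> maxQ V E (Q (3 * k')) - 2"
proof -
  interpret nsb_system V E Q S using assms(1-3) by unfold_locales
  show ?thesis using nodeQ_after_frame_le[OF _ assms(4)] by (rule maxQ_le[OF finite_V nonempty])
qed

end
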